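(* Let $k\ge 2$ and let $A_k$ be the $k\times k^2$ array whose entry in row $r$ and column $j=sk+c$ (with $0\le r,s,c\le k-1$) is $(s+rc)\bmod k$. Suppose that at two distinct L-positions of $A_k$ the L-fillings read are $(a,b,d_1)$ and $(a,b,d_2)$ respectively (same $a$ and same $b$). Then the cells containing $d_1$ and $d_2$ lie in different rows (equivalently, the two cells containing $a$ lie in different rows).
   Context: Array indices are cyclic: rows mod $k$, columns mod $k^2$. Every column index $j\in\{0,\dots,k^2-1\}$ is written uniquely as $j=sk+c$ with $0\le s,c\le k-1$; $s$ is the square number and $c$ the column number (within the square). An L-position is a pair $(i,j)$, and the L-filling read at $(i,j)$ is the triple $(A(i,j),\,A(i+1 \bmod k,\,j),\,A(i+1 \bmod k,\,j+1 \bmod k^2))$: the upper-left cell $a$, the cell $b$ directly below it, and the cell $d$ directly to the right of $b$. Two L-positions are distinct if they differ as pairs $(i,j)$. *)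

theory Defs
  imports Main
begin

text \<open>The array A_k: entry in row r, column j = s*k + c is (s + r*c) mod k.
  Rows are indexed mod k, columns mod k^2.\<close>
definition Ak :: "nat \<Rightarrow> nat \<Rightarrow> nat \<Rightarrow> nat" where
  "Ak k r j = ((j div k) + r * (j mod k)) mod k"

definition L_filling :: "nat \<Rightarrow> nat \<Rightarrow> nat \<Rightarrow> nat \<times> nat \<times> nat" where
  "L_filling k i j = (Ak k i j, Ak k ((i + 1) mod k) j, Ak k ((i + 1) mod k) ((j + 1) mod (k^2)))"

end

theory Submission
  imports Defs "HOL-Number_Theory.Cong"
begin

text \<open>Going down one row adds the column number to every entry:
  A(r+1, sk+c) = A(r, sk+c) + c (mod k). So the two vertically adjacent cells a, b
  of an L determine c = b - a and then s from a = s + rc (mod k); that is, within a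
  fixed pair of rows the pair (a, b) determines the column. Two distinct L-positions
  with the same a and b therefore cannot lie in the same row.\<close>

lemma Ak_next_row:
  "Ak k ((r + 1) mod k) j = (Ak k r j + j mod k) mod k"
proof -
  have "Ak k ((r + 1) mod k) j = (j div k + (r + 1) * (j mod k)) mod k"
    unfolding Ak_def by (metis mod_add_right_eq mod_mult_left_eq)
  also have "\<dots> = ((j div k + r * (j mod k)) + j mod k) mod k"
    by (simp only: distrib_right mult_1 add.assoc)
  also have "\<dots> = (Ak k r j + j mod k) mod k"
    unfolding Ak_def by (rule mod_add_left_eq[symmetric])
  finally show ?thesis .
qed

lemma Suc_mod_eq_imp_eq:
  fixes i1 i2 k :: nat
  assumes "i1 < k" "i2 < k" "(i1 + 1) mod k = (i2 + 1) mod k"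
  shows "i1 = i2"
proof -
  have "[i1 + 1 = i2 + 1] (mod k)" using assms(3) by (simp only: cong_def)
  then have "[i1 = i2] (mod k)" by (simp only: cong_add_rcancel_nat)
  then show ?thesis using assms(1,2) by (simp add: cong_def)
qed

lemma div_less_of_less_square:
  fixes j k :: nat
  assumes "j < k^2"
  shows "j div k < k"
  using assms by (simp add: less_mult_imp_div_less power2_eq_square)

lemma Ak_adjacent_rows_inj:
  fixes k r j1 j2 :: nat
  assumes "j1 < k^2" "j2 < k^2"
    and upper: "Ak k r j1 = Ak k r j2"
    and lower: "Ak k ((r + 1) mod k) j1 = Ak k ((r + 1) mod k) j2"
  shows "j1 = j2"
proof -
  have "[Ak k r j1 + j1 mod k = Ak k r j1 + j2 mod k] (mod k)"
    using lower upper by (simp only: Ak_next_row cong_def)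
  then have "[j1 mod k = j2 mod k] (mod k)" by (simp only: cong_add_lcancel_nat)
  then have col: "j1 mod k = j2 mod k" by (simp add: cong_def)
  have "[j1 div k + r * (j1 mod k) = j2 div k + r * (j1 mod k)] (mod k)"
    using upper col by (simp only: Ak_def cong_def)
  then have "[j1 div k = j2 div k] (mod k)" by (simp only: cong_add_rcancel_nat)
  then have "j1 div k = j2 div k"
    using assms(1,2) by (simp add: cong_def div_less_of_less_square)
  with col show ?thesis by (metis div_mod_decomp)
qed

theorem lemma2:
  fixes k i1 j1 i2 j2 a b d1 d2 :: nat
  assumes "k \<ge> 2"
    and "i1 < k" and "j1 < k^2" and "i2 < k" and "j2 < k^2"
    and "(i1, j1) \<noteq> (i2, j2)"
    and "L_filling k i1 j1 = (a, b, d1)"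
    and "L_filling k i2 j2 = (a, b, d2)"
  shows "(i1 + 1) mod k \<noteq> (i2 + 1) mod k"
proof
  assume "(i1 + 1) mod k = (i2 + 1) mod k"
  with assms(2,4) have rows: "i1 = i2" by (rule Suc_mod_eq_imp_eq)
  have "Ak k i1 j1 = Ak k i1 j2" "Ak k ((i1 + 1) mod k) j1 = Ak k ((i1 + 1) mod k) j2"
    using assms(7,8) rows by (simp_all only: L_filling_def prod.inject)
  with assms(3,5) have "j1 = j2" by (rule Ak_adjacent_rows_inj)
  with rows assms(6) show False by simp
qed

end
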